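(* Let $d,f\in\mathbb{Z}$ with $d\ge3$ and $f\in\{0,1,\dots,d-1\}$, and let $B\subseteq\mathbb{R}^2$ with $|B|=\binom{f+2}{2}$ be such that $B$ is not contained in any element of $\mathcal{C}_{\le f}$. Then for all $e\in\{1,\dots,d-1\}$ and $D\subseteq B$, \[ \max\{\tau_e(B,D),\mu_e(B,D)\}<\binom{d+2}{2}. \]
   Context: For $k\in\mathbb{Z}^+$, a curve of degree $k$ is the zero set in $\mathbb{R}^2$ of a polynomial in $\mathbb{R}[x,y]$ of degree exactly $k$; $\mathcal{C}_k$ is the family of such curves, $\mathcal{C}_{\le k}:=\bigcup_{j=1}^k\mathcal{C}_j$, $\mathcal{C}_{\le0}:=\emptyset$. For $k\in\mathbb{Z}^+$ let $I_k=\{(i,j)\in\mathbb{Z}_{\ge 0}^2: 1\le i+j\le k\}$ and $\psi_k:\mathbb{R}^2\to\mathbb{R}^{\binom{k+2}{2}-1}$, $\psi_k(a_1,a_2)=(a_1^ia_2^j)_{(i,j)\in I_k}$. $\mathrm{Fl}(S)$ is the affine hull of $S$ ($\mathrm{Fl}(\emptyset)=\emptyset$, $\dim\emptyset=-1$). With $d$ fixed, for $e\in\{1,\dots,d-1\}$, finite $B\subseteq\mathbb{R}^2$ and $D\subseteq B$: $V_e(D):=\mathrm{Fl}(\psi_e(D))$; $W_e(B,D):=\mathrm{Fl}\big(\psi_{d-e}(B\setminus\psi_e^{-1}(V_e(D)))\big)$; $\alpha_e(D):=\binom{e+2}{2}-2-\dim V_e(D)$; $\beta_e(B,D):=\binom{d-e+2}{2}-3-\dim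 W_e(B,D)$; $\gamma_e(B,D):=|V_e(D)\cap\psi_e(B)|$; $\mu_e(B,D):=0$ if $\alpha_e(D)<0$, else $\mu_e(B,D):=\alpha_e(D)+\gamma_e(B,D)+\binom{d-e+2}{2}$; $\tau_e(B,D):=0$ if $\min\{\alpha_e(D),\beta_e(B,D)\}<0$ or $\gamma_e(B,D)>\binom{d+2}{2}-\binom{d-e+2}{2}-1$; $:=\alpha_e(D)+\beta_e(B,D)+|B|+2$ if $\min\{\alpha_e(D),\beta_e(B,D)\}\ge0$ and $\gamma_e(B,D)=\binom{d+2}{2}-\binom{d-e+2}{2}-1$; $:=\alpha_e(D)+\beta_e(B,D)+|B|+3$ if $\min\{\alpha_e(D),\beta_e(B,D)\}\ge0$ and $\gamma_e(B,D)<\binom{d+2}{2}-\binom{d-e+2}{2}-1$. *)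

theory Defs
  imports "HOL-Analysis.Analysis"
begin

definition exps :: "nat \<Rightarrow> (nat \<times> nat) set" where
  "exps k = {(i, j). i + j \<le> k}"

definition poly2_eval :: "nat \<Rightarrow> (nat \<times> nat \<Rightarrow> real) \<Rightarrow> real \<times> real \<Rightarrow> real" where
  "poly2_eval k c p = (\<Sum>(i, j)\<in>exps k. c (i, j) * fst p ^ i * snd p ^ j)"

definition curve_of_degree :: "nat \<Rightarrow> (real \<times> real) set \<Rightarrow> bool" where
  "curve_of_degree k C \<longleftrightarrow>
     (\<exists>c. (\<forall>i j. k < i + j \<longrightarrow> c (i, j) = 0) \<and>
          (\<exists>i j. i + j = k \<and> c (i, j) \<noteq> 0) \<and>
          C = {p. poly2_eval k c p = 0})"

text \<open>Membership in the family C_{\<le>k} (empty for k = 0).\<close>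
definition curve_le :: "nat \<Rightarrow> (real \<times> real) set \<Rightarrow> bool" where
  "curve_le k C \<longleftrightarrow> (\<exists>j\<in>{1..k}. curve_of_degree j C)"

text \<open>R^{I_k} is represented as functions (nat \<times> nat) \<Rightarrow> real vanishing outside I_k.\<close>
definition psi :: "nat \<Rightarrow> real \<times> real \<Rightarrow> (nat \<times> nat \<Rightarrow> real)" where
  "psi k a = (\<lambda>(i, j). if 1 \<le> i + j \<and> i + j \<le> k then fst a ^ i * snd a ^ j else 0)"

definition Fl :: "('i \<Rightarrow> real) set \<Rightarrow> ('i \<Rightarrow> real) set" where
  "Fl S = {x. \<exists>T u. finite T \<and> T \<noteq> {} \<and> T \<subseteq> S \<and> sum u T = 1 \<and>
                    x = (\<lambda>i. \<Sum>t\<in>T. u t * t i)}"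

definition aff_indep :: "('i \<Rightarrow> real) set \<Rightarrow> bool" where
  "aff_indep T \<longleftrightarrow> finite T \<and>
     (\<forall>u. sum u T = 0 \<and> (\<forall>i. (\<Sum>t\<in>T. u t * t i) = 0) \<longrightarrow> (\<forall>t\<in>T. u t = 0))"

text \<open>Dimension of a flat F: (maximal size of an affinely independent subset) - 1;
  this gives -1 for the empty set.\<close>
definition flat_dim :: "('i \<Rightarrow> real) set \<Rightarrow> int" where
  "flat_dim F = int (Max {card T | T. T \<subseteq> F \<and> aff_indep T}) - 1"

definition V_e :: "nat \<Rightarrow> (real \<times> real) set \<Rightarrow> (nat \<times> nat \<Rightarrow> real) set" where
  "V_e e D = Fl (psi e ` D)"

definition W_e :: "nat \<Rightarrow> nat \<Rightarrow> (real \<times> real) set \<Rightarrow> (real \<times> real) set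
                    \<Rightarrow> (nat \<times> nat \<Rightarrow> real) set" where
  "W_e d e B D = Fl (psi (d - e) ` (B - {a. psi e a \<in> V_e e D}))"

definition alpha_e :: "nat \<Rightarrow> (real \<times> real) set \<Rightarrow> int" where
  "alpha_e e D = int ((e + 2) choose 2) - 2 - flat_dim (V_e e D)"

definition beta_e :: "nat \<Rightarrow> nat \<Rightarrow> (real \<times> real) set \<Rightarrow> (real \<times> real) set \<Rightarrow> int" where
  "beta_e d e B D = int ((d - e + 2) choose 2) - 3 - flat_dim (W_e d e B D)"

definition gamma_e :: "nat \<Rightarrow> (real \<times> real) set \<Rightarrow> (real \<times> real) set \<Rightarrow> nat" where
  "gamma_e e B D = card (V_e e D \<inter> psi e ` B)"

definition mu_e :: "nat \<Rightarrow> nat \<Rightarrow> (real \<times> real) set \<Rightarrow> (real \<times> real) set \<Rightarrow> int" where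
  "mu_e d e B D =
     (if alpha_e e D < 0 then 0
      else alpha_e e D + int (gamma_e e B D) + int ((d - e + 2) choose 2))"

definition tau_e :: "nat \<Rightarrow> nat \<Rightarrow> (real \<times> real) set \<Rightarrow> (real \<times> real) set \<Rightarrow> int" where
  "tau_e d e B D =
     (let a = alpha_e e D; b = beta_e d e B D; g = int (gamma_e e B D);
          m = int ((d + 2) choose 2) - int ((d - e + 2) choose 2) - 1
      in if min a b < 0 \<or> g > m then 0
         else if g = m then a + b + int (card B) + 2
         else a + b + int (card B) + 3)"

end

theory Submission
  imports Defs "HOL-Library.Nat_Bijection"
begin

(* Encode a polynomial of degree at most k by its coefficients on the monomials x^i y^j,
   i + j <= k, and let lead_monoms k S be the set of grlex-leading monomials of the nonzero such
   polynomials vanishing on the point set S. Its size is the dimension of that space, so S imposes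
   at least binom(k+2,2) - |lead_monoms k S| independent conditions; this bounds the dimension of
   the affine hull of psi_k(S) from below and gives alpha_e(D) <= |lead_monoms e P| - 1 and
   beta_e(B,D) <= |lead_monoms (d-e) (B - P)| - 2, where P is the set of points of B mapped into
   V_e(D) by psi_e, and gamma_e(B,D) = |P|.

   As B lies on no curve of degree at most f and has binom(f+2,2) points, it is unisolvent in
   degree f, so |S| + |lead_monoms k S| <= binom(k+2,2) for all subsets S of B and k >= f. The sets
   lead_monoms k S are closed under multiplication by monomials of admissible degree, which forces
   them to grow from degree l to degree f; and a leading monomial for P times one for B - P is the
   leading monomial of a polynomial vanishing on B, so their degrees add up to more than f. With
   these facts the bounds on mu and tau become inequalities between binomial coefficients. *)

declare split_paired_All [simp del] split_paired_Ex [simp del]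

section \<open>Monomials and the graded lexicographic order\<close>

definition mdeg :: "nat \<times> nat \<Rightarrow> nat" where
  "mdeg m = fst m + snd m"

lemma mdeg_add [simp]: "mdeg (a + b) = mdeg a + mdeg b"
  by (simp add: mdeg_def)

lemma mdeg_zero [simp]: "mdeg 0 = 0"
  by (simp add: mdeg_def)

lemma mdeg_eq_0_iff: "mdeg m = 0 \<longleftrightarrow> m = 0"
  by (cases m) (simp add: mdeg_def zero_prod_def)

lemma mem_exps [simp]: "m \<in> exps k \<longleftrightarrow> mdeg m \<le> k"
  by (cases m) (simp add: exps_def mdeg_def)

lemma finite_exps [simp]: "finite (exps k)"
  by (rule finite_subset[of _ "{..k} \<times> {..k}"]) (auto simp: mdeg_def)

lemma card_exps: "card (exps k) = (k + 2) choose 2"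
proof (induction k)
  case 0
  have "exps 0 = {0}" by (auto simp: mdeg_def zero_prod_def)
  then show ?case by (simp add: choose_two)
next
  case (Suc k)
  have "exps (Suc k) = exps k \<union> (\<lambda>i. (i, Suc k - i)) ` {..Suc k}"
    by (auto simp: mdeg_def image_iff)
  moreover have "exps k \<inter> (\<lambda>i. (i, Suc k - i)) ` {..Suc k} = {}"
    by (auto simp: mdeg_def)
  moreover have "inj_on (\<lambda>i. (i, Suc k - i)) {..Suc k}" by (auto simp: inj_on_def)
  ultimately show ?case using Suc by (simp add: card_Un_disjoint card_image numeral_2_eq_2)
qed

definition grlex :: "nat \<times> nat \<Rightarrow> nat \<times> nat \<Rightarrow> bool" where
  "grlex m m' \<longleftrightarrow> mdeg m < mdeg m' \<or> mdeg m = mdeg m' \<and> fst m \<le> fst m'"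

lemma triangle_add_less: "a < b \<Longrightarrow> triangle a + a < triangle b"
  by (induction b) (auto simp: less_Suc_eq)

lemma grlex_iff_prod_encode: "grlex m m' \<longleftrightarrow> prod_encode m \<le> prod_encode m'"
proof -
  have enc: "prod_encode x = triangle (mdeg x) + fst x" "fst x \<le> mdeg x" for x
    by (auto simp: prod_encode_def mdeg_def split: prod.split)
  consider "mdeg m < mdeg m'" | "mdeg m' < mdeg m" | "mdeg m = mdeg m'" by linarith
  then show ?thesis
  proof cases
    case 1
    then show ?thesis using triangle_add_less[OF 1] enc[of m] enc[of m'] by (simp add: grlex_def)
  next
    case 2
    then show ?thesis using triangle_add_less[OF 2] enc[of m] enc[of m'] by (simp add: grlex_def)
  qed (simp add: grlex_def enc)
qed

lemma grlex_antisym: "grlex a b \<Longrightarrow> grlex b a \<Longrightarrow> a = b"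
  by (simp add: grlex_iff_prod_encode)

lemma grlex_mdeg: "grlex a b \<Longrightarrow> mdeg a \<le> mdeg b"
  by (auto simp: grlex_def)

lemma grlex_add_mono: "grlex a b \<Longrightarrow> grlex c d \<Longrightarrow> grlex (a + c) (b + d)"
  by (auto simp: grlex_def mdeg_def)

lemma grlex_add_strict: "grlex a b \<Longrightarrow> a \<noteq> b \<Longrightarrow> grlex c d \<Longrightarrow> a + c \<noteq> b + d"
  by (auto simp: grlex_def mdeg_def prod_eq_iff)

lemma ex_grlex_min:
  assumes "finite S" "S \<noteq> {}"
  shows "\<exists>m\<in>S. \<forall>m'\<in>S. grlex m m'"
proof -
  have "Min (prod_encode ` S) \<in> prod_encode ` S" using assms by simp
  then obtain m where "m \<in> S" "prod_encode m = Min (prod_encode ` S)" by auto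
  then show ?thesis using assms by (metis Min_le finite_imageI imageI grlex_iff_prod_encode)
qed

definition supp :: "(nat \<times> nat \<Rightarrow> real) \<Rightarrow> (nat \<times> nat) set" where
  "supp c = {m. c m \<noteq> 0}"

definition lead_monom :: "(nat \<times> nat \<Rightarrow> real) \<Rightarrow> nat \<times> nat" where
  "lead_monom c = prod_decode (Max (prod_encode ` supp c))"

lemma
  assumes "finite (supp c)" "supp c \<noteq> {}"
  shows lead_monom_nonzero: "c (lead_monom c) \<noteq> 0"
    and grlex_lead_monom: "c m \<noteq> 0 \<Longrightarrow> grlex m (lead_monom c)"
proof -
  have "Max (prod_encode ` supp c) \<in> prod_encode ` supp c" using assms by simp
  then show "c (lead_monom c) \<noteq> 0" by (auto simp: lead_monom_def supp_def)
  show "c m \<noteq> 0 \<Longrightarrow> grlex m (lead_monom c)"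
    using assms by (simp add: lead_monom_def grlex_iff_prod_encode supp_def)
qed

lemma lead_monom_eqI:
  assumes "c m \<noteq> 0" "\<And>m'. c m' \<noteq> 0 \<Longrightarrow> grlex m' m"
  shows "lead_monom c = m"
proof -
  have "supp c \<subseteq> {m'. prod_encode m' \<le> prod_encode m}"
    using assms(2) by (auto simp: supp_def grlex_iff_prod_encode)
  moreover have "finite {m'. prod_encode m' \<le> prod_encode m}"
    using finite_vimageI[OF finite_atMost inj_prod_encode, of "prod_encode m"] by (simp add: vimage_def)
  ultimately have fin: "finite (supp c)" by (rule finite_subset)
  have ne: "supp c \<noteq> {}" using assms(1) unfolding supp_def by blast
  have "grlex (lead_monom c) m" using assms(2) lead_monom_nonzero[OF fin ne] .
  moreover have "grlex m (lead_monom c)" using grlex_lead_monom[OF fin ne assms(1)] .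
  ultimately show ?thesis by (rule grlex_antisym)
qed

section \<open>Polynomials vanishing on a point set and their leading monomials\<close>

definition monom_eval :: "real \<times> real \<Rightarrow> nat \<times> nat \<Rightarrow> real" where
  "monom_eval p m = fst p ^ fst m * snd p ^ snd m"

lemma monom_eval_add: "monom_eval p (m + s) = monom_eval p m * monom_eval p s"
  by (simp add: monom_eval_def power_add)

lemma monom_eval_zero [simp]: "monom_eval p 0 = 1"
  by (simp add: monom_eval_def)

lemma poly2_eval_monom_eval: "poly2_eval k c p = (\<Sum>m\<in>exps k. c m * monom_eval p m)"
  unfolding poly2_eval_def by (intro sum.cong) (auto simp: monom_eval_def)

definition deg_le :: "nat \<Rightarrow> (nat \<times> nat \<Rightarrow> real) \<Rightarrow> bool" where
  "deg_le k c \<longleftrightarrow> (\<forall>m. c m \<noteq> 0 \<longrightarrow> mdeg m \<le> k)"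

lemma supp_subset_exps: "deg_le k c \<Longrightarrow> supp c \<subseteq> exps k"
  by (auto simp: deg_le_def supp_def)

lemma finite_supp: "deg_le k c \<Longrightarrow> finite (supp c)"
  by (rule finite_subset[OF supp_subset_exps]) simp_all

lemma deg_le_mono: "deg_le k c \<Longrightarrow> k \<le> k' \<Longrightarrow> deg_le k' c"
  by (auto simp: deg_le_def)

lemma poly2_eval_deg_le:
  assumes "deg_le k c" "k \<le> k'"
  shows "poly2_eval k' c p = poly2_eval k c p"
  unfolding poly2_eval_monom_eval
proof (rule sum.mono_neutral_right)
  show "\<forall>m\<in>exps k' - exps k. c m * monom_eval p m = 0"
    using assms(1) by (auto simp: deg_le_def)
qed (use assms(2) in auto)

lemma deg_le_lead_monom:
  assumes "deg_le k c" "supp c \<noteq> {}"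
  shows "deg_le (mdeg (lead_monom c)) c" "mdeg (lead_monom c) \<le> k"
  using grlex_lead_monom[OF finite_supp[OF assms(1)] assms(2)]
    lead_monom_nonzero[OF finite_supp[OF assms(1)] assms(2)] assms(1)
  by (auto simp: deg_le_def dest: grlex_mdeg)

definition vanishing :: "nat \<Rightarrow> (real \<times> real) set \<Rightarrow> (nat \<times> nat \<Rightarrow> real) set" where
  "vanishing k S = {c. deg_le k c \<and> (\<forall>p\<in>S. poly2_eval k c p = 0)}"

lemma vanishing_mono_deg:
  assumes "c \<in> vanishing k S" "k \<le> k'"
  shows "c \<in> vanishing k' S"
proof -
  have "deg_le k c" "\<forall>p\<in>S. poly2_eval k c p = 0" using assms(1) by (auto simp: vanishing_def)
  then show ?thesis
    using assms(2) deg_le_mono[of k c k'] poly2_eval_deg_le[of k c k'] by (simp add: vanishing_def)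
qed

lemma vanishing_lead_deg:
  assumes "c \<in> vanishing k S" "supp c \<noteq> {}"
  shows "c \<in> vanishing (mdeg (lead_monom c)) S"
proof -
  have c: "deg_le k c" "\<forall>p\<in>S. poly2_eval k c p = 0" using assms(1) by (auto simp: vanishing_def)
  note low = deg_le_lead_monom[OF c(1) assms(2)]
  show ?thesis using c(2) poly2_eval_deg_le[OF low] low by (simp add: vanishing_def)
qed

definition lead_monoms :: "nat \<Rightarrow> (real \<times> real) set \<Rightarrow> (nat \<times> nat) set" where
  "lead_monoms k S = lead_monom ` {c \<in> vanishing k S. supp c \<noteq> {}}"

lemma mdeg_lead_monoms: "x \<in> lead_monoms k S \<Longrightarrow> mdeg x \<le> k"
  using deg_le_lead_monom(2) by (auto simp: lead_monoms_def vanishing_def)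

lemma lead_monoms_subset_exps: "lead_monoms k S \<subseteq> exps k"
  using mdeg_lead_monoms by auto

lemma finite_lead_monoms [simp]: "finite (lead_monoms k S)"
  by (rule finite_subset[OF lead_monoms_subset_exps]) simp

lemma add_diff_cancel_le: "(s :: nat \<times> nat) \<le> m \<Longrightarrow> m - s + s = m"
  by (simp add: prod_eq_iff less_eq_prod_def)

definition monom_mult :: "nat \<times> nat \<Rightarrow> (nat \<times> nat \<Rightarrow> real) \<Rightarrow> nat \<times> nat \<Rightarrow> real" where
  "monom_mult s c = (\<lambda>m. if s \<le> m then c (m - s) else 0)"

lemma monom_mult_add [simp]: "monom_mult s c (m + s) = c m"
  by (simp add: monom_mult_def less_eq_prod_def)

lemma monom_mult_nonzeroD: "monom_mult s c m \<noteq> 0 \<Longrightarrow> s \<le> m \<and> c (m - s) \<noteq> 0"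
  by (auto simp: monom_mult_def split: if_splits)

lemma deg_le_monom_mult: "deg_le k c \<Longrightarrow> deg_le (k + mdeg s) (monom_mult s c)"
  unfolding deg_le_def by (metis add_diff_cancel_le add_le_cancel_right mdeg_add monom_mult_nonzeroD)

lemma poly2_eval_monom_mult:
  assumes "deg_le k c"
  shows "poly2_eval (k + mdeg s) (monom_mult s c) p = monom_eval p s * poly2_eval k c p"
proof -
  have inj: "inj_on (\<lambda>m. m + s) (exps k)" by (rule inj_onI) simp
  have "monom_eval p s * poly2_eval k c p
      = (\<Sum>m\<in>(\<lambda>m. m + s) ` exps k. monom_mult s c m * monom_eval p m)"
    unfolding poly2_eval_monom_eval
    by (simp add: sum.reindex[OF inj] sum_distrib_left monom_eval_add mult_ac)
  also have "\<dots> = (\<Sum>m\<in>exps (k + mdeg s). monom_mult s c m * monom_eval p m)"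
  proof (rule sum.mono_neutral_left)
    show "\<forall>m\<in>exps (k + mdeg s) - (\<lambda>m. m + s) ` exps k. monom_mult s c m * monom_eval p m = 0"
    proof
      fix m assume m: "m \<in> exps (k + mdeg s) - (\<lambda>m. m + s) ` exps k"
      show "monom_mult s c m * monom_eval p m = 0"
      proof (rule ccontr)
        assume "monom_mult s c m * monom_eval p m \<noteq> 0"
        then have "monom_mult s c m \<noteq> 0" by simp
        then have "s \<le> m" "c (m - s) \<noteq> 0" by (auto dest: monom_mult_nonzeroD)
        then have "m - s \<in> exps k" "m = (m - s) + s"
          using assms by (auto simp: deg_le_def add_diff_cancel_le)
        then show False using m by blast
      qed
    qed
  qed auto
  finally show ?thesis by (simp add: poly2_eval_monom_eval)
qed

lemma lead_monom_monom_mult: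
  assumes "deg_le k c" "supp c \<noteq> {}"
  shows "lead_monom (monom_mult s c) = lead_monom c + s"
proof (rule lead_monom_eqI)
  have fin: "finite (supp c)" using finite_supp[OF assms(1)] .
  show "monom_mult s c (lead_monom c + s) \<noteq> 0" using lead_monom_nonzero[OF fin assms(2)] by simp
  fix m assume "monom_mult s c m \<noteq> 0"
  then have "s \<le> m" "c (m - s) \<noteq> 0" by (auto dest: monom_mult_nonzeroD)
  then show "grlex m (lead_monom c + s)"
    using grlex_add_mono[OF grlex_lead_monom[OF fin assms(2)], of "m - s" s s]
    by (simp add: add_diff_cancel_le grlex_def)
qed

lemma lead_monoms_upward_closed:
  assumes "x \<in> lead_monoms k S" "x \<le> t" "mdeg t \<le> k'"
  shows "t \<in> lead_monoms k' S"
proof -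
  obtain c where c: "c \<in> vanishing k S" "supp c \<noteq> {}" "lead_monom c = x"
    using assms(1) by (auto simp: lead_monoms_def)
  have low: "c \<in> vanishing (mdeg x) S" using vanishing_lead_deg[OF c(1,2)] c(3) by simp
  then have dx: "deg_le (mdeg x) c" by (simp add: vanishing_def)
  have t: "mdeg x + mdeg (t - x) = mdeg t" using add_diff_cancel_le[OF assms(2)]
    by (metis add.commute mdeg_add)
  have "monom_mult (t - x) c \<in> vanishing (mdeg x + mdeg (t - x)) S"
    using low poly2_eval_monom_mult[OF dx] deg_le_monom_mult[OF dx] by (simp add: vanishing_def)
  then have "monom_mult (t - x) c \<in> vanishing k' S"
    using assms(3) t by (auto intro: vanishing_mono_deg)
  moreover have "lead_monom (monom_mult (t - x) c) = t"
    using lead_monom_monom_mult[OF dx c(2)] c(3) add_diff_cancel_le[OF assms(2)]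
    by (simp add: add.commute)
  moreover have "t = x + (t - x)" using add_diff_cancel_le[OF assms(2)] by (metis add.commute)
  then have "monom_mult (t - x) c t = c x" by (metis monom_mult_add)
  then have "monom_mult (t - x) c t \<noteq> 0"
    using lead_monom_nonzero[OF finite_supp[OF dx] c(2)] c(3) by simp
  then have "supp (monom_mult (t - x) c) \<noteq> {}" unfolding supp_def by blast
  ultimately show ?thesis unfolding lead_monoms_def by (metis (mono_tags, lifting) image_eqI mem_Collect_eq)
qed

definition poly_mult :: "nat \<Rightarrow> (nat \<times> nat \<Rightarrow> real) \<Rightarrow> (nat \<times> nat \<Rightarrow> real) \<Rightarrow> nat \<times> nat \<Rightarrow> real" where
  "poly_mult k w c = (\<lambda>m. \<Sum>s\<in>exps k. w s * monom_mult s c m)"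

lemma deg_le_poly_mult:
  assumes "deg_le kc c"
  shows "deg_le (kc + kw) (poly_mult kw w c)"
  unfolding deg_le_def
proof (intro allI impI)
  fix m assume "poly_mult kw w c m \<noteq> 0"
  then obtain s where s: "s \<in> exps kw" "monom_mult s c m \<noteq> 0"
    unfolding poly_mult_def by (metis (no_types, lifting) mult_zero_right sum.neutral)
  then show "mdeg m \<le> kc + kw"
    using deg_le_monom_mult[OF assms, of s] by (auto simp: deg_le_def)
qed

lemma poly2_eval_poly_mult:
  assumes "deg_le kc c" "deg_le kw w"
  shows "poly2_eval (kc + kw) (poly_mult kw w c) p = poly2_eval kw w p * poly2_eval kc c p"
proof -
  have "poly2_eval (kc + kw) (poly_mult kw w c) p
      = (\<Sum>s\<in>exps kw. w s * poly2_eval (kc + kw) (monom_mult s c) p)"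
    unfolding poly2_eval_monom_eval poly_mult_def
    by (simp add: sum_distrib_right sum_distrib_left mult_ac sum.swap[of _ "exps kw"])
  also have "\<dots> = (\<Sum>s\<in>exps kw. w s * (monom_eval p s * poly2_eval kc c p))"
  proof (rule sum.cong[OF refl])
    fix s assume "s \<in> exps kw"
    then have "poly2_eval (kc + kw) (monom_mult s c) p = poly2_eval (kc + mdeg s) (monom_mult s c) p"
      by (intro poly2_eval_deg_le deg_le_monom_mult assms(1)) simp
    then show "w s * poly2_eval (kc + kw) (monom_mult s c) p = w s * (monom_eval p s * poly2_eval kc c p)"
      by (simp add: poly2_eval_monom_mult[OF assms(1)])
  qed
  also have "\<dots> = (\<Sum>s\<in>exps kw. w s * monom_eval p s) * poly2_eval kc c p"
    by (simp add: sum_distrib_right mult.assoc)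
  finally show ?thesis by (simp add: poly2_eval_monom_eval)
qed

text \<open>Only the product of the two leading terms contributes to this coefficient, since \<open>grlex\<close> is
  compatible with addition of monomials.\<close>
lemma poly_mult_lead_monom_nonzero:
  assumes "deg_le kc c" "deg_le kw w" "supp c \<noteq> {}" "supp w \<noteq> {}"
  shows "poly_mult kw w c (lead_monom c + lead_monom w) \<noteq> 0"
proof -
  have fc: "finite (supp c)" and fw: "finite (supp w)" using finite_supp assms by blast+
  let ?t = "lead_monom c + lead_monom w"
  have lw: "lead_monom w \<in> exps kw"
    using deg_le_lead_monom(2)[OF assms(2,4)] by simp
  have others: "w s * monom_mult s c ?t = 0" if "s \<in> exps kw - {lead_monom w}" for s
  proof (rule ccontr)
    assume "w s * monom_mult s c ?t \<noteq> 0"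
    then have ws: "w s \<noteq> 0" and st: "s \<le> ?t" "c (?t - s) \<noteq> 0"
      by (auto dest: monom_mult_nonzeroD)
    have "s + (?t - s) \<noteq> lead_monom w + lead_monom c"
      using grlex_add_strict[OF grlex_lead_monom[OF fw assms(4) ws]]
        grlex_lead_monom[OF fc assms(3) st(2)] that by blast
    then show False using add_diff_cancel_le[OF st(1)] by (simp add: add.commute)
  qed
  have "poly_mult kw w c ?t = w (lead_monom w) * monom_mult (lead_monom w) c ?t
      + (\<Sum>s\<in>exps kw - {lead_monom w}. w s * monom_mult s c ?t)"
    unfolding poly_mult_def by (rule sum.remove[OF finite_exps lw])
  also have "(\<Sum>s\<in>exps kw - {lead_monom w}. w s * monom_mult s c ?t) = 0"
    by (rule sum.neutral) (use others in blast)
  also have "monom_mult (lead_monom w) c ?t = c (lead_monom c)" by simp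
  finally show ?thesis
    using lead_monom_nonzero[OF fc assms(3)] lead_monom_nonzero[OF fw assms(4)] by simp
qed

lemma vanishing_union_nonzero:
  assumes "c \<in> vanishing k1 S1" "w \<in> vanishing k2 S2" "supp c \<noteq> {}" "supp w \<noteq> {}"
  shows "\<exists>c'\<in>vanishing (k1 + k2) (S1 \<union> S2). supp c' \<noteq> {}"
proof -
  have dc: "deg_le k1 c" and dw: "deg_le k2 w" using assms by (auto simp: vanishing_def)
  have "poly_mult k2 w c \<in> vanishing (k1 + k2) (S1 \<union> S2)"
    using deg_le_poly_mult[OF dc] poly2_eval_poly_mult[OF dc dw] assms(1,2)
    by (auto simp: vanishing_def)
  moreover have "supp (poly_mult k2 w c) \<noteq> {}"
    using poly_mult_lead_monom_nonzero[OF dc dw assms(3,4)] unfolding supp_def by blast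
  ultimately show ?thesis by blast
qed

lemma lead_monoms_mdeg_add_gt:
  assumes "\<forall>c\<in>vanishing f (S1 \<union> S2). supp c = {}"
    and "x \<in> lead_monoms k1 S1" "y \<in> lead_monoms k2 S2"
  shows "f < mdeg x + mdeg y"
proof (rule ccontr)
  assume le: "\<not> f < mdeg x + mdeg y"
  obtain c where c: "c \<in> vanishing k1 S1" "supp c \<noteq> {}" "lead_monom c = x"
    using assms(2) unfolding lead_monoms_def by blast
  obtain w where w: "w \<in> vanishing k2 S2" "supp w \<noteq> {}" "lead_monom w = y"
    using assms(3) unfolding lead_monoms_def by blast
  obtain c' where "c' \<in> vanishing (mdeg x + mdeg y) (S1 \<union> S2)" "supp c' \<noteq> {}"
    using vanishing_union_nonzero[OF vanishing_lead_deg[OF c(1,2)] vanishing_lead_deg[OF w(1,2)]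
        c(2) w(2)] c(3) w(3) by blast
  then show False using assms(1) vanishing_mono_deg[of c' _ _ f] le by auto
qed

section \<open>Independent conditions\<close>

lemma homogeneous_system_nontrivial_solution:
  fixes A :: "'j \<Rightarrow> 'i \<Rightarrow> 'a :: field"
  assumes "finite I" "finite J" "card I < card J"
  shows "\<exists>c. (\<exists>j\<in>J. c j \<noteq> 0) \<and> (\<forall>i\<in>I. (\<Sum>j\<in>J. c j * A j i) = 0)"
  using assms
proof (induction I arbitrary: J A rule: finite_induct)
  case empty
  then obtain j0 where "j0 \<in> J" by fastforce
  then show ?case by (intro exI[of _ "\<lambda>j. if j = j0 then 1 else 0"]) auto
next
  case (insert i0 I)
  show ?case
  proof (cases "\<forall>j\<in>J. A j i0 = 0")
    case True
    from insert.IH[of J A] insert.prems insert.hyps obtain c where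
      "\<exists>j\<in>J. c j \<noteq> 0" "\<forall>i\<in>I. (\<Sum>j\<in>J. c j * A j i) = 0" by auto
    with True show ?thesis by auto
  next
    case False
    then obtain j0 where j0: "j0 \<in> J" "A j0 i0 \<noteq> 0" by auto
    define J' where "J' = J - {j0}"
    have J: "J = insert j0 J'" "j0 \<notin> J'" "finite J'" "card I < card J'"
      using insert j0 by (auto simp: J'_def)
    \<comment> \<open>eliminate the unknown \<open>j0\<close> by means of the equation \<open>i0\<close>\<close>
    obtain c' where c': "\<exists>j\<in>J'. c' j \<noteq> 0"
      "\<forall>i\<in>I. (\<Sum>j\<in>J'. c' j * (A j i - A j i0 / A j0 i0 * A j0 i)) = 0"
      using insert.IH[OF J(3,4), where A = "\<lambda>j i. A j i - A j i0 / A j0 i0 * A j0 i"] by blast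
    define c0 where "c0 = - (\<Sum>j\<in>J'. c' j * A j i0) / A j0 i0"
    define c where "c = c'(j0 := c0)"
    have sum_c: "(\<Sum>j\<in>J. c j * A j i) = c0 * A j0 i + (\<Sum>j\<in>J'. c' j * A j i)" for i
    proof -
      have "(\<Sum>j\<in>J'. c j * A j i) = (\<Sum>j\<in>J'. c' j * A j i)"
        using J(2) by (intro sum.cong) (auto simp: c_def)
      then show ?thesis using J by (simp add: c_def)
    qed
    have "(\<Sum>j\<in>J. c j * A j i) = 0" if "i \<in> insert i0 I" for i
    proof (cases "i = i0")
      case True
      then show ?thesis using j0 by (simp add: sum_c c0_def)
    next
      case False
      have "(\<Sum>j\<in>J'. c' j * (A j i - A j i0 / A j0 i0 * A j0 i)) = (\<Sum>j\<in>J. c j * A j i)"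
        by (simp add: sum_c c0_def right_diff_distrib sum_subtractf sum_distrib_left
            sum_distrib_right sum_divide_distrib mult_ac add_ac)
      moreover have "i \<in> I" using that False by simp
      ultimately show ?thesis using c'(2) by metis
    qed
    moreover have "\<exists>j\<in>J. c j \<noteq> 0" using c' J by (auto simp: c_def)
    ultimately show ?thesis by blast
  qed
qed

definition monom_vec :: "nat \<Rightarrow> real \<times> real \<Rightarrow> nat \<times> nat \<Rightarrow> real" where
  "monom_vec k p m = (if mdeg m \<le> k then monom_eval p m else 0)"

definition indep_conditions :: "nat \<Rightarrow> (real \<times> real) set \<Rightarrow> bool" where
  "indep_conditions k M \<longleftrightarrow> finite M \<and>
     (\<forall>u. (\<forall>m. (\<Sum>p\<in>M. u p * monom_vec k p m) = 0) \<longrightarrow> (\<forall>p\<in>M. u p = 0))"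

lemma poly2_eval_monom_vec: "poly2_eval k c p = (\<Sum>m\<in>exps k. c m * monom_vec k p m)"
  unfolding poly2_eval_monom_eval monom_vec_def by (intro sum.cong) auto

lemma indep_conditions_empty: "indep_conditions k {}"
  by (simp add: indep_conditions_def)

lemma indep_conditions_subset:
  assumes "indep_conditions k M" "M' \<subseteq> M"
  shows "indep_conditions k M'"
  unfolding indep_conditions_def
proof (intro conjI allI impI)
  show "finite M'" using assms finite_subset by (auto simp: indep_conditions_def)
  fix u assume u: "\<forall>m. (\<Sum>p\<in>M'. u p * monom_vec k p m) = 0"
  define u' where "u' p = (if p \<in> M' then u p else 0)" for p
  have "(\<Sum>p\<in>M. u' p * monom_vec k p m) = (\<Sum>p\<in>M'. u p * monom_vec k p m)" for m
  proof -
    have "(\<Sum>p\<in>M. u' p * monom_vec k p m) = (\<Sum>p\<in>M'. u' p * monom_vec k p m)"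
      using assms by (intro sum.mono_neutral_right) (auto simp: u'_def indep_conditions_def)
    then show ?thesis by (simp add: u'_def)
  qed
  then have "\<forall>p\<in>M. u' p = 0" using assms(1) u unfolding indep_conditions_def by metis
  then show "\<forall>p\<in>M'. u p = 0" using assms(2) unfolding u'_def by (metis subsetD)
qed

lemma indep_conditions_mono_deg:
  assumes "indep_conditions f M" "f \<le> k"
  shows "indep_conditions k M"
  unfolding indep_conditions_def
proof (intro conjI allI impI)
  show "finite M" using assms by (simp add: indep_conditions_def)
  fix u assume u: "\<forall>m. (\<Sum>p\<in>M. u p * monom_vec k p m) = 0"
  have "(\<Sum>p\<in>M. u p * monom_vec f p m) = 0" for m
    using u[rule_format, of m] assms(2) by (cases "mdeg m \<le> f") (auto simp: monom_vec_def)
  then show "\<forall>p\<in>M. u p = 0" using assms(1) by (auto simp: indep_conditions_def)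
qed

lemma ex_maximal_indep_conditions_subset:
  assumes "finite D"
  obtains M where "M \<subseteq> D" "indep_conditions k M"
    "\<And>p. p \<in> D - M \<Longrightarrow> \<not> indep_conditions k (insert p M)"
proof -
  let ?C = "{card M | M. M \<subseteq> D \<and> indep_conditions k M}"
  have fin: "finite ?C"
    by (rule finite_subset[of _ "{..card D}"]) (auto intro: card_mono assms)
  have "0 \<in> ?C" using indep_conditions_empty by force
  then have "Max ?C \<in> ?C" using fin Max_in by blast
  then obtain M where M: "M \<subseteq> D" "indep_conditions k M" "card M = Max ?C" by auto
  have "\<not> indep_conditions k (insert p M)" if "p \<in> D - M" for p
  proof
    assume "indep_conditions k (insert p M)"
    then have "card (insert p M) \<le> Max ?C" using that M(1) fin by (intro Max_ge) auto
    then show False using M(2,3) that by (simp add: indep_conditions_def)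
  qed
  then show ?thesis using M that by blast
qed

lemma annihilates_dependent_point:
  assumes "indep_conditions k M" "p \<notin> M" "\<not> indep_conditions k (insert p M)"
    and "\<forall>q\<in>M. (\<Sum>m\<in>J. c m * monom_vec k q m) = 0"
  shows "(\<Sum>m\<in>J. c m * monom_vec k p m) = 0"
proof -
  have fM: "finite M" using assms(1) by (simp add: indep_conditions_def)
  then obtain u where u: "\<forall>m. (\<Sum>q\<in>insert p M. u q * monom_vec k q m) = 0"
    "\<exists>q\<in>insert p M. u q \<noteq> 0"
    using assms(3) unfolding indep_conditions_def by blast
  have "u p \<noteq> 0"
  proof
    assume "u p = 0"
    then have "\<forall>m. (\<Sum>q\<in>M. u q * monom_vec k q m) = 0" using u(1) assms(2) fM by simp
    then have "\<forall>q\<in>M. u q = 0" using assms(1) unfolding indep_conditions_def by blast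
    then show False using u(2) \<open>u p = 0\<close> by blast
  qed
  have "0 = (\<Sum>m\<in>J. c m * (\<Sum>q\<in>insert p M. u q * monom_vec k q m))" using u(1) by simp
  also have "\<dots> = (\<Sum>q\<in>insert p M. u q * (\<Sum>m\<in>J. c m * monom_vec k q m))"
    by (simp add: sum_distrib_left mult_ac sum.swap[of _ J])
  also have "\<dots> = u p * (\<Sum>m\<in>J. c m * monom_vec k p m)" using assms(2,4) fM by simp
  finally show ?thesis using \<open>u p \<noteq> 0\<close> by simp
qed

lemma card_exps_diff_lead_monoms:
  "card (exps k - lead_monoms k S) = ((k + 2) choose 2) - card (lead_monoms k S)"
  using lead_monoms_subset_exps[of k S] by (simp add: card_Diff_subset card_exps)

text \<open>If \<open>M\<close> were smaller, some nonzero polynomial supported outside \<open>lead_monoms k D\<close> would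
  vanish on \<open>M\<close>, hence on \<open>D\<close> by maximality, and its leading monomial would lie in
  \<open>lead_monoms k D\<close>.\<close>
lemma ex_indep_conditions_subset:
  assumes "finite D"
  obtains M where "M \<subseteq> D" "indep_conditions k M" "(k + 2) choose 2 \<le> card M + card (lead_monoms k D)"
proof -
  obtain M where M: "M \<subseteq> D" "indep_conditions k M"
    and max: "\<And>p. p \<in> D - M \<Longrightarrow> \<not> indep_conditions k (insert p M)"
    using ex_maximal_indep_conditions_subset[OF assms] by blast
  have fM: "finite M" using M(2) by (simp add: indep_conditions_def)
  define J where "J = exps k - lead_monoms k D"
  have "(k + 2) choose 2 \<le> card M + card (lead_monoms k D)"
  proof (rule ccontr)
    assume "\<not> ?thesis"
    then have "card M < card J" using card_exps_diff_lead_monoms[of k D] by (simp add: J_def)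
    then obtain c where c: "\<exists>m\<in>J. c m \<noteq> 0" "\<forall>q\<in>M. (\<Sum>m\<in>J. c m * monom_vec k q m) = 0"
      using homogeneous_system_nontrivial_solution[of M J "\<lambda>m q. monom_vec k q m"] fM
      by (auto simp: J_def)
    define c' where "c' m = (if m \<in> J then c m else 0)" for m
    have J: "J \<subseteq> exps k" by (auto simp: J_def)
    have "poly2_eval k c' p = (\<Sum>m\<in>J. c m * monom_vec k p m)" for p
      unfolding poly2_eval_monom_vec using J
      by (subst sum.mono_neutral_right[OF finite_exps J]) (auto simp: c'_def)
    moreover have "(\<Sum>m\<in>J. c m * monom_vec k p m) = 0" if "p \<in> D" for p
    proof (cases "p \<in> M")
      case False
      with that show ?thesis using annihilates_dependent_point[OF M(2) False max] c(2) by blast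
    qed (use c(2) in blast)
    moreover have dc: "deg_le k c'" using J by (auto simp: deg_le_def c'_def)
    ultimately have van: "c' \<in> vanishing k D" by (simp add: vanishing_def)
    have sc: "supp c' \<noteq> {}" using c(1) unfolding supp_def c'_def by auto
    then have "lead_monom c' \<in> lead_monoms k D" using van unfolding lead_monoms_def by blast
    moreover have "c' (lead_monom c') \<noteq> 0" using lead_monom_nonzero[OF finite_supp[OF dc] sc] .
    then have "lead_monom c' \<in> J" by (auto simp: c'_def split: if_splits)
    ultimately show False by (simp add: J_def)
  qed
  with M that show ?thesis by blast
qed

lemma sum_mult_lead_monom_nonzero:
  assumes "deg_le k z" "supp z \<noteq> {}" "w (lead_monom z) \<noteq> 0"
    and "\<And>m. w m \<noteq> 0 \<Longrightarrow> grlex (lead_monom z) m"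
  shows "(\<Sum>m\<in>exps k. z m * w m) \<noteq> 0"
proof -
  have fz: "finite (supp z)" using finite_supp[OF assms(1)] .
  have lz: "lead_monom z \<in> exps k" using deg_le_lead_monom(2)[OF assms(1,2)] by simp
  have "z m * w m = 0" if "m \<in> exps k - {lead_monom z}" for m
  proof (rule ccontr)
    assume "z m * w m \<noteq> 0"
    then have "grlex m (lead_monom z)" "grlex (lead_monom z) m"
      using grlex_lead_monom[OF fz assms(2)] assms(4) by auto
    then show False using that grlex_antisym by blast
  qed
  then have "(\<Sum>m\<in>exps k. z m * w m) = z (lead_monom z) * w (lead_monom z)"
    using sum.remove[OF finite_exps lz, of "\<lambda>m. z m * w m"] by (simp add: sum.neutral)
  then show ?thesis using lead_monom_nonzero[OF fz assms(2)] assms(3) by simp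
qed

text \<open>Otherwise some nonzero combination \<open>w\<close> of the vectors \<open>monom_vec k p\<close>, \<open>p \<in> S\<close>, is
  supported on \<open>lead_monoms k S\<close>; pairing \<open>w\<close> with a vanishing polynomial whose leading
  monomial is the grlex-least element of the support of \<open>w\<close> gives a contradiction.\<close>
lemma indep_conditions_card_le:
  assumes "indep_conditions k S"
  shows "card S + card (lead_monoms k S) \<le> (k + 2) choose 2"
proof (rule ccontr)
  assume "\<not> ?thesis"
  moreover have "card (lead_monoms k S) \<le> (k + 2) choose 2"
    using card_mono[OF finite_exps lead_monoms_subset_exps[of k S]] by (simp add: card_exps)
  ultimately have lt: "card (exps k - lead_monoms k S) < card S"
    using card_exps_diff_lead_monoms[of k S] by linarith
  have fS: "finite S" using assms by (simp add: indep_conditions_def)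
  obtain u where u: "\<exists>q\<in>S. u q \<noteq> 0"
    "\<forall>m\<in>exps k - lead_monoms k S. (\<Sum>q\<in>S. u q * monom_vec k q m) = 0"
    using homogeneous_system_nontrivial_solution[of "exps k - lead_monoms k S" S
        "\<lambda>q m. monom_vec k q m"] fS lt by auto
  define w where "w m = (\<Sum>q\<in>S. u q * monom_vec k q m)" for m
  have sw: "supp w \<noteq> {}"
    using assms u(1) unfolding indep_conditions_def supp_def w_def by blast
  have "mdeg m \<le> k" if "w m \<noteq> 0" for m
    using that by (cases "mdeg m \<le> k") (auto simp: w_def monom_vec_def)
  then have swl: "supp w \<subseteq> lead_monoms k S" using u(2) by (auto simp: supp_def w_def)
  obtain m0 where m0: "m0 \<in> supp w" "\<And>m. m \<in> supp w \<Longrightarrow> grlex m0 m"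
    using ex_grlex_min[OF finite_subset[OF swl finite_lead_monoms] sw] by blast
  obtain z where z: "z \<in> vanishing k S" "supp z \<noteq> {}" "lead_monom z = m0"
    using swl m0(1) unfolding lead_monoms_def by blast
  have dz: "deg_le k z" using z(1) by (simp add: vanishing_def)
  have "(\<Sum>m\<in>exps k. z m * w m) = (\<Sum>q\<in>S. u q * poly2_eval k z q)"
    unfolding w_def poly2_eval_monom_vec
    by (simp add: sum_distrib_left mult_ac sum.swap[of _ S])
  also have "\<dots> = 0" using z(1) by (simp add: vanishing_def)
  finally show False
    using sum_mult_lead_monom_nonzero[OF dz z(2)] z(3) m0 by (auto simp: supp_def)
qed

section \<open>Counting up-sets of monomials\<close>

lemma card_degree_level_le: "card {x \<in> X. mdeg x = e} \<le> e + 1"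
proof -
  have "{x \<in> X. mdeg x = e} \<subseteq> (\<lambda>i. (i, e - i)) ` {..e}"
    by (auto simp: mdeg_def image_iff)
  then have "card {x \<in> X. mdeg x = e} \<le> card ((\<lambda>i. (i, e - i)) ` {..e})"
    by (intro card_mono) auto
  also have "\<dots> \<le> e + 1" using card_image_le[of "{..e}" "\<lambda>i. (i, e - i)"] by simp
  finally show ?thesis .
qed

text \<open>Shifting by \<open>(e - l, 0)\<close> embeds the degree \<open>l\<close> part of the up-set into its top degree part.\<close>
lemma card_upward_closed_le:
  assumes "finite X" "\<forall>x\<in>X. h < mdeg x \<and> mdeg x \<le> e"
    and "\<forall>x\<in>X. \<forall>t. x \<le> t \<and> mdeg t \<le> e \<longrightarrow> t \<in> X"
  shows "card X \<le> (e - h) * card {x \<in> X. mdeg x = e}"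
proof -
  let ?top = "{x \<in> X. mdeg x = e}"
  have level: "card {x \<in> X. mdeg x = l} \<le> card ?top" if "l \<le> e" for l
  proof -
    let ?g = "\<lambda>x. x + (e - l, 0)"
    have "?g ` {x \<in> X. mdeg x = l} \<subseteq> ?top"
      using assms(3) that by (auto simp: mdeg_def less_eq_prod_def)
    then have "card (?g ` {x \<in> X. mdeg x = l}) \<le> card ?top"
      using assms(1) by (intro card_mono) auto
    moreover have "inj_on ?g {x \<in> X. mdeg x = l}" by (rule inj_onI) simp
    ultimately show ?thesis by (simp add: card_image)
  qed
  have "card X \<le> card (\<Union>l\<in>{h<..e}. {x \<in> X. mdeg x = l})"
    using assms(1,2) by (intro card_mono) auto
  also have "\<dots> \<le> (\<Sum>l\<in>{h<..e}. card {x \<in> X. mdeg x = l})"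
    by (rule card_UN_le) simp
  also have "\<dots> \<le> (\<Sum>l\<in>{h<..e}. card ?top)" by (intro sum_mono level) simp
  finally show ?thesis by simp
qed

lemma card_monoms_snd_pos: "card {s. mdeg s \<le> j \<and> 0 < snd s} = (j + 1) choose 2"
proof (cases j)
  case 0
  have "{s. mdeg s \<le> 0 \<and> 0 < snd s} = {}" by (auto simp: mdeg_def)
  then show ?thesis unfolding 0 by (simp only:) simp
next
  case (Suc i)
  have "{s. mdeg s \<le> j \<and> 0 < snd s} = (\<lambda>s. s + (0, 1)) ` exps i"
  proof (intro set_eqI iffI)
    fix s assume "s \<in> {s. mdeg s \<le> j \<and> 0 < snd s}"
    then have "s - (0, 1) \<in> exps i" "s = s - (0, 1) + (0, 1)"
      using Suc by (auto simp: mdeg_def prod_eq_iff)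
    then show "s \<in> (\<lambda>s. s + (0, 1)) ` exps i" by (rule image_eqI[rotated])
  qed (auto simp: Suc mdeg_def)
  moreover have "inj_on (\<lambda>s. s + (0, 1)) (exps i)" by (rule inj_onI) simp
  ultimately show ?thesis using Suc by (simp add: card_image card_exps)
qed

text \<open>Shifting the top degree part by \<open>(t, 0)\<close>, \<open>1 \<le> t \<le> j\<close>, and its element \<open>xs\<close> with the
  largest second exponent by every monomial of degree at most \<open>j\<close> with positive second exponent
  gives disjoint new elements of \<open>Y\<close>.\<close>
lemma card_upward_closed_growth:
  assumes "finite Y" "X \<subseteq> Y" "\<forall>x\<in>X. mdeg x \<le> e"
    and "\<forall>x\<in>X. \<forall>t. x \<le> t \<and> mdeg t \<le> e + j \<longrightarrow> t \<in> Y"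
    and "{x \<in> X. mdeg x = e} \<noteq> {}"
  shows "card X + j * card {x \<in> X. mdeg x = e} + ((j + 1) choose 2) \<le> card Y"
proof -
  define top where "top = {x \<in> X. mdeg x = e}"
  have "finite X" using assms(1,2) finite_subset by blast
  then have fin: "finite X" "finite top" by (simp_all add: top_def)
  have "Max (snd ` top) \<in> snd ` top" using fin assms(5) by (simp add: top_def)
  then obtain xs where xs: "xs \<in> top" "snd xs = Max (snd ` top)" by auto
  have xs_max: "snd x \<le> snd xs" if "x \<in> top" for x using fin that xs(2) by simp
  define T1 where "T1 = (\<lambda>(x, t). x + (t, 0)) ` (top \<times> {1..j})"
  define T2 where "T2 = (\<lambda>s. xs + s) ` {s. mdeg s \<le> j \<and> 0 < snd s}"
  have "inj_on (\<lambda>(x, t). x + (t, 0)) (top \<times> {1..j})"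
    by (rule inj_onI) (auto simp: top_def mdeg_def prod_eq_iff)
  then have cT1: "card T1 = j * card top"
    unfolding T1_def using fin by (simp add: card_image card_cartesian_product)
  have cT2: "card T2 = (j + 1) choose 2"
    unfolding T2_def by (subst card_image) (auto simp: inj_on_def card_monoms_snd_pos)
  have T1: "x \<in> Y \<and> e < mdeg x \<and> snd x \<le> snd xs" if x: "x \<in> T1" for x
  proof -
    obtain y t where y: "y \<in> top" "1 \<le> t" "t \<le> j" "x = y + (t, 0)"
      using x unfolding T1_def by auto
    then have "y \<in> X" "y \<le> x" "mdeg x = e + t"
      by (auto simp: top_def less_eq_prod_def mdeg_def)
    then show ?thesis using assms(4) xs_max[OF y(1)] y by auto
  qed
  have T2: "x \<in> Y \<and> e < mdeg x \<and> snd xs < snd x" if x: "x \<in> T2" for x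
  proof -
    obtain s where s: "mdeg s \<le> j" "0 < snd s" "x = xs + s"
      using x unfolding T2_def by auto
    moreover have "xs \<in> X" "mdeg xs = e" using xs(1) by (auto simp: top_def)
    moreover have "0 < mdeg s" using s(2) by (simp add: mdeg_def)
    ultimately show ?thesis using assms(4) by (auto simp: less_eq_prod_def)
  qed
  have disj: "X \<inter> T1 = {}" "(X \<union> T1) \<inter> T2 = {}"
    using T1 T2 assms(3) by (fastforce simp: disjoint_iff)+
  have sub: "T1 \<subseteq> Y" "T2 \<subseteq> Y" using T1 T2 by blast+
  have fT: "finite T1" "finite T2" using finite_subset[OF sub(1) assms(1)] finite_subset[OF sub(2) assms(1)] .
  have "card X + card T1 + card T2 = card (X \<union> T1 \<union> T2)"
    using fin fT disj by (simp add: card_Un_disjoint)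
  also have "\<dots> \<le> card Y" using assms(1,2) sub by (intro card_mono) auto
  finally show ?thesis using cT1 cT2 unfolding top_def by simp
qed

lemma lead_monoms_top_degree_nonempty:
  assumes "x \<in> lead_monoms e S"
  shows "{y \<in> lead_monoms e S. mdeg y = e} \<noteq> {}"
proof -
  let ?t = "x + (e - mdeg x, 0)"
  have "mdeg ?t = e" using mdeg_lead_monoms[OF assms] by (simp add: mdeg_def)
  moreover have "?t \<in> lead_monoms e S"
    using lead_monoms_upward_closed[OF assms, of ?t e] calculation by (simp add: less_eq_prod_def)
  ultimately show ?thesis by blast
qed

lemma card_lead_monoms_growth:
  assumes "lead_monoms e S \<noteq> {}" "e \<le> f"
  shows "card (lead_monoms e S) + (f - e) * card {x \<in> lead_monoms e S. mdeg x = e}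
      + ((f - e + 1) choose 2) \<le> card (lead_monoms f S)"
proof (rule card_upward_closed_growth)
  show "lead_monoms e S \<subseteq> lead_monoms f S"
    using lead_monoms_upward_closed[OF _ order.refl] mdeg_lead_monoms assms(2) by (meson le_trans subsetI)
  show "\<forall>x\<in>lead_monoms e S. \<forall>t. x \<le> t \<and> mdeg t \<le> e + (f - e) \<longrightarrow> t \<in> lead_monoms f S"
    using lead_monoms_upward_closed assms(2) by simp
  show "{x \<in> lead_monoms e S. mdeg x = e} \<noteq> {}"
    using assms(1) lead_monoms_top_degree_nonempty by blast
qed (auto simp: mdeg_lead_monoms)

lemma card_lead_monoms_le_levels:
  assumes "\<forall>x\<in>lead_monoms e S. h < mdeg x"
  shows "card (lead_monoms e S) \<le> (e - h) * card {x \<in> lead_monoms e S. mdeg x = e}"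
  using assms by (intro card_upward_closed_le) (auto intro: lead_monoms_upward_closed mdeg_lead_monoms)

section \<open>Affine hulls of Veronese images\<close>

lemma psi_eq: "psi k p m = (if 1 \<le> mdeg m \<and> mdeg m \<le> k then monom_eval p m else 0)"
  by (cases m) (simp add: psi_def mdeg_def monom_eval_def)

lemma inj_psi: "1 \<le> k \<Longrightarrow> inj (psi k)"
proof (rule injI)
  fix a b assume "1 \<le> k" "psi k a = psi k b"
  then have "psi k a (1, 0) = psi k b (1, 0)" "psi k a (0, 1) = psi k b (0, 1)" by simp_all
  with \<open>1 \<le> k\<close> show "a = b" by (simp add: psi_def prod_eq_iff)
qed

lemma poly2_eval_psi: "poly2_eval k c p = c 0 + (\<Sum>m\<in>exps k - {0}. c m * psi k p m)"
proof -
  have "(\<Sum>m\<in>exps k - {0}. c m * monom_eval p m) = (\<Sum>m\<in>exps k - {0}. c m * psi k p m)"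
  proof (rule sum.cong[OF refl])
    fix m assume "m \<in> exps k - {0}"
    then have "1 \<le> mdeg m" "mdeg m \<le> k" using mdeg_eq_0_iff[of m] by auto
    then show "c m * monom_eval p m = c m * psi k p m" by (simp add: psi_eq)
  qed
  then show ?thesis
    unfolding poly2_eval_monom_eval by (subst sum.remove[of _ 0]) auto
qed

lemma Fl_psi_zero:
  assumes "t \<in> Fl (psi k ` S)"
  shows "t 0 = 0" "\<not> mdeg m \<le> k \<Longrightarrow> t m = 0"
proof -
  obtain T u where T: "T \<subseteq> psi k ` S" "t = (\<lambda>i. \<Sum>s\<in>T. u s * s i)"
    using assms unfolding Fl_def by blast
  have "s 0 = 0" "\<not> mdeg m \<le> k \<Longrightarrow> s m = 0" if "s \<in> T" for s
    using that T(1) by (auto simp: psi_eq)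
  then show "t 0 = 0" "\<not> mdeg m \<le> k \<Longrightarrow> t m = 0" unfolding T(2) by (auto intro!: sum.neutral)
qed

lemma psi_mem_Fl: "p \<in> S \<Longrightarrow> psi k p \<in> Fl (psi k ` S)"
  unfolding Fl_def by (intro CollectI exI[of _ "{psi k p}"] exI[of _ "\<lambda>_. 1"]) auto

text \<open>In the coordinates \<open>psi k\<close>, evaluating a polynomial of degree \<open>k\<close> is an affine map.\<close>
lemma poly2_eval_zero_if_psi_mem_Fl:
  assumes "\<forall>p\<in>D. poly2_eval k c p = 0" "psi k b \<in> Fl (psi k ` D)"
  shows "poly2_eval k c b = 0"
proof -
  obtain T u where T: "finite T" "T \<subseteq> psi k ` D" "sum u T = 1"
    "psi k b = (\<lambda>i. \<Sum>t\<in>T. u t * t i)"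
    using assms(2) unfolding Fl_def by blast
  let ?aff = "\<lambda>t. c 0 + (\<Sum>m\<in>exps k - {0}. c m * t m)"
  have "poly2_eval k c b = c 0 * sum u T + (\<Sum>m\<in>exps k - {0}. c m * (\<Sum>t\<in>T. u t * t m))"
    unfolding poly2_eval_psi T(4) using T(3) by simp
  also have "\<dots> = (\<Sum>t\<in>T. u t * ?aff t)"
    by (simp add: distrib_left sum.distrib sum_distrib_left sum_distrib_right mult_ac
        sum.swap[of _ T])
  also have "\<dots> = 0"
  proof (rule sum.neutral, rule ballI)
    fix t assume "t \<in> T"
    then obtain p where "p \<in> D" "t = psi k p" using T(2) by blast
    then show "u t * ?aff t = 0" using assms(1) by (simp add: poly2_eval_psi)
  qed
  finally show ?thesis .
qed

lemma card_aff_indep_le: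
  assumes "T \<subseteq> Fl (psi k ` S)" "aff_indep T"
  shows "card T \<le> (k + 2) choose 2"
proof (rule ccontr)
  assume "\<not> ?thesis"
  then have lt: "card (exps k) < card T" by (simp add: card_exps)
  have fT: "finite T" using assms(2) by (simp add: aff_indep_def)
  define A :: "(nat \<times> nat \<Rightarrow> real) \<Rightarrow> nat \<times> nat \<Rightarrow> real"
    where "A t m = (if m = 0 then 1 else t m)" for t m
  obtain c where c: "\<exists>t\<in>T. c t \<noteq> 0" "\<forall>m\<in>exps k. (\<Sum>t\<in>T. c t * A t m) = 0"
    using homogeneous_system_nontrivial_solution[of "exps k" T A] fT lt by auto
  have "sum c T = 0" using c(2)[rule_format, of 0] by (simp add: A_def)
  moreover have "(\<Sum>t\<in>T. c t * t m) = 0" for m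
  proof -
    consider "m = 0" | "m \<noteq> 0" "mdeg m \<le> k" | "\<not> mdeg m \<le> k" by blast
    then show ?thesis
    proof cases
      case 1
      then have "\<forall>t\<in>T. c t * t m = 0" using assms(1) Fl_psi_zero(1) by (metis mult_zero_right subsetD)
      then show ?thesis by (rule sum.neutral)
    next
      case 2
      then show ?thesis using c(2)[rule_format, of m] by (simp add: A_def)
    next
      case 3
      then have "\<forall>t\<in>T. c t * t m = 0" using assms(1) Fl_psi_zero(2) by (metis mult_zero_right subsetD)
      then show ?thesis by (rule sum.neutral)
    qed
  qed
  ultimately have "\<forall>t\<in>T. c t = 0" using assms(2) unfolding aff_indep_def by blast
  then show False using c(1) by blast
qed

lemma aff_indep_psi_image:
  assumes "indep_conditions k M" "1 \<le> k"
  shows "aff_indep (psi k ` M)"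
  unfolding aff_indep_def
proof (intro conjI allI impI)
  show "finite (psi k ` M)" using assms by (simp add: indep_conditions_def)
  have inj: "inj_on (psi k) M" using inj_psi[OF assms(2)] inj_on_subset by blast
  fix u assume u: "sum u (psi k ` M) = 0 \<and> (\<forall>i. (\<Sum>t\<in>psi k ` M. u t * t i) = 0)"
  have s0: "(\<Sum>p\<in>M. u (psi k p)) = 0" and s1: "(\<Sum>p\<in>M. u (psi k p) * psi k p m) = 0" for m
    using u sum.reindex[OF inj, of u] sum.reindex[OF inj, of "\<lambda>t. u t * t m"] by simp_all
  have "(\<Sum>p\<in>M. u (psi k p) * monom_vec k p m) = 0" for m
  proof -
    consider "m = 0" | "1 \<le> mdeg m" "mdeg m \<le> k" | "\<not> mdeg m \<le> k"
      using mdeg_eq_0_iff[of m] by linarith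
    then show ?thesis
    proof cases
      case 1 then show ?thesis using s0 by (simp add: monom_vec_def)
    next
      case 2 then show ?thesis using s1[of m] by (simp add: monom_vec_def psi_eq)
    next
      case 3 then show ?thesis by (simp add: monom_vec_def)
    qed
  qed
  then show "\<forall>t\<in>psi k ` M. u t = 0"
    using assms(1)[unfolded indep_conditions_def, THEN conjunct2, rule_format, of "\<lambda>p. u (psi k p)"]
    by auto
qed

lemma flat_dim_Fl_psi_ge:
  assumes "indep_conditions k M" "M \<subseteq> S" "1 \<le> k"
  shows "int (card M) - 1 \<le> flat_dim (Fl (psi k ` S))"
proof -
  let ?C = "{card T | T. T \<subseteq> Fl (psi k ` S) \<and> aff_indep T}"
  have "finite ?C"
    by (rule finite_subset[of _ "{..(k + 2) choose 2}"]) (auto dest: card_aff_indep_le)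
  moreover have "card (psi k ` M) \<in> ?C"
    using psi_mem_Fl assms(2) aff_indep_psi_image[OF assms(1,3)] by blast
  ultimately have "card (psi k ` M) \<le> Max ?C" by simp
  moreover have "card (psi k ` M) = card M"
    using inj_psi[OF assms(3)] inj_on_subset card_image by blast
  ultimately show ?thesis unfolding flat_dim_def by simp
qed

lemma gamma_e_eq:
  assumes "1 \<le> e"
  shows "gamma_e e B D = card {b \<in> B. psi e b \<in> V_e e D}"
proof -
  have "V_e e D \<inter> psi e ` B = psi e ` {b \<in> B. psi e b \<in> V_e e D}" by auto
  moreover have "inj_on (psi e) {b \<in> B. psi e b \<in> V_e e D}"
    using inj_psi[OF assms] inj_on_subset by blast
  ultimately show ?thesis unfolding gamma_e_def by (simp add: card_image)
qed

lemma alpha_e_le: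
  assumes "finite B" "D \<subseteq> B" "1 \<le> e"
  shows "alpha_e e D \<le> int (card (lead_monoms e {b \<in> B. psi e b \<in> V_e e D})) - 1"
proof -
  obtain M where M: "M \<subseteq> D" "indep_conditions e M"
    "(e + 2) choose 2 \<le> card M + card (lead_monoms e D)"
    using ex_indep_conditions_subset[OF finite_subset[OF assms(2,1)]] by blast
  have "vanishing e D \<subseteq> vanishing e {b \<in> B. psi e b \<in> V_e e D}"
    using poly2_eval_zero_if_psi_mem_Fl by (auto simp: vanishing_def V_e_def)
  then have "lead_monoms e D \<subseteq> lead_monoms e {b \<in> B. psi e b \<in> V_e e D}"
    unfolding lead_monoms_def by blast
  then have "card (lead_monoms e D) \<le> card (lead_monoms e {b \<in> B. psi e b \<in> V_e e D})"
    by (intro card_mono) simp_all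
  then show ?thesis
    using M(3) flat_dim_Fl_psi_ge[OF M(2,1) assms(3)] unfolding alpha_e_def V_e_def by linarith
qed

lemma beta_e_le:
  assumes "finite B" "e < d"
  shows "beta_e d e B D \<le> int (card (lead_monoms (d - e) (B - {b \<in> B. psi e b \<in> V_e e D}))) - 2"
proof -
  let ?R = "B - {b \<in> B. psi e b \<in> V_e e D}"
  obtain M where M: "M \<subseteq> ?R" "indep_conditions (d - e) M"
    "(d - e + 2) choose 2 \<le> card M + card (lead_monoms (d - e) ?R)"
    using ex_indep_conditions_subset[of ?R] assms(1) by blast
  have "?R = B - {b. psi e b \<in> V_e e D}" by auto
  then have "int (card M) - 1 \<le> flat_dim (W_e d e B D)"
    unfolding W_e_def using flat_dim_Fl_psi_ge[OF M(2,1)] assms(2) by simp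
  then show ?thesis using M(3) unfolding beta_e_def by linarith
qed

section \<open>Unisolvent sets\<close>

lemma vanishing_trivial_if_not_on_curve:
  assumes "\<not> (\<exists>C. curve_le f C \<and> B \<subseteq> C)" "B \<noteq> {}" "c \<in> vanishing f B"
  shows "supp c = {}"
proof (rule ccontr)
  assume sc: "supp c \<noteq> {}"
  define j where "j = mdeg (lead_monom c)"
  have cj: "c \<in> vanishing j B" unfolding j_def using vanishing_lead_deg[OF assms(3) sc] .
  have dc: "deg_le f c" using assms(3) by (simp add: vanishing_def)
  have lead: "c (lead_monom c) \<noteq> 0" using lead_monom_nonzero[OF finite_supp[OF dc] sc] .
  have jf: "j \<le> f" unfolding j_def using deg_le_lead_monom(2)[OF dc sc] .
  show False
  proof (cases "j = 0")
    case True
    then have "lead_monom c = 0" unfolding j_def by (simp add: mdeg_eq_0_iff)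
    moreover have "exps 0 = {0}" using mdeg_eq_0_iff by auto
    moreover obtain p where "p \<in> B" using assms(2) by blast
    ultimately show False using cj lead True by (simp add: vanishing_def poly2_eval_monom_eval)
  next
    case False
    have "curve_of_degree j {p. poly2_eval j c p = 0}"
      unfolding curve_of_degree_def
    proof (intro exI[of _ c] conjI)
      show "\<forall>a b. j < a + b \<longrightarrow> c (a, b) = 0"
        using cj by (auto simp: vanishing_def deg_le_def mdeg_def)
      show "\<exists>a b. a + b = j \<and> c (a, b) \<noteq> 0"
        using lead unfolding j_def mdeg_def
        by (intro exI[of _ "fst (lead_monom c)"] exI[of _ "snd (lead_monom c)"]) simp
    qed simp
    then have "curve_le f {p. poly2_eval j c p = 0}" using False jf by (auto simp: curve_le_def)
    moreover have "B \<subseteq> {p. poly2_eval j c p = 0}" using cj by (auto simp: vanishing_def)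
    ultimately show False using assms(1) by blast
  qed
qed

definition unisolvent :: "nat \<Rightarrow> (real \<times> real) set \<Rightarrow> bool" where
  "unisolvent f B \<longleftrightarrow> finite B \<and> card B = (f + 2) choose 2 \<and> (\<forall>c\<in>vanishing f B. supp c = {})"

lemma unisolvent_if_not_on_curve:
  assumes "finite B" "card B = (f + 2) choose 2" "\<not> (\<exists>C. curve_le f C \<and> B \<subseteq> C)"
  shows "unisolvent f B"
proof -
  have "B \<noteq> {}" using assms(2) by auto
  then show ?thesis using assms vanishing_trivial_if_not_on_curve by (auto simp: unisolvent_def)
qed

lemma unisolvent_indep_conditions:
  assumes "unisolvent f B"
  shows "indep_conditions f B"
proof -
  have fB: "finite B" and cB: "card B = (f + 2) choose 2" and "lead_monoms f B = {}"
    using assms by (auto simp: unisolvent_def lead_monoms_def)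
  moreover obtain M where "M \<subseteq> B" "indep_conditions f M"
    "(f + 2) choose 2 \<le> card M + card (lead_monoms f B)"
    using ex_indep_conditions_subset[OF fB] by blast
  ultimately show ?thesis by (metis add.right_neutral card.empty card_seteq)
qed

lemma unisolvent_card_lead_monoms_le:
  assumes "unisolvent f B" "S \<subseteq> B" "f \<le> k"
  shows "card S + card (lead_monoms k S) \<le> (k + 2) choose 2"
  using indep_conditions_card_le indep_conditions_mono_deg indep_conditions_subset
    unisolvent_indep_conditions assms by blast

lemma unisolvent_card_lead_monoms_growth:
  assumes "unisolvent f B" "S \<subseteq> B" "l \<le> f" "lead_monoms l S \<noteq> {}"
  shows "card S + card (lead_monoms l S) + (f - l) * card {x \<in> lead_monoms l S. mdeg x = l}
      + ((f - l + 1) choose 2) \<le> (f + 2) choose 2"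
  using card_lead_monoms_growth[OF assms(4,3)] unisolvent_card_lead_monoms_le[OF assms(1,2) order.refl]
  by linarith

lemma unisolvent_mdeg_lead_monoms_gt:
  assumes "unisolvent f B" "P \<union> Q = B" "x \<in> lead_monoms k P" "y \<in> lead_monoms l Q"
  shows "f < mdeg x + mdeg y"
proof -
  have "\<forall>c\<in>vanishing f (P \<union> Q). supp c = {}" using assms(1,2) by (simp add: unisolvent_def)
  then show ?thesis using lead_monoms_mdeg_add_gt assms(3,4) by blast
qed

lemma unisolvent_card_partition:
  assumes "unisolvent f B" "P \<union> Q = B" "P \<inter> Q = {}"
  shows "card P + card Q = (f + 2) choose 2"
  using assms card_Un_disjoint[of P Q] by (auto simp: unisolvent_def)

lemma unisolvent_card_lead_monoms_add_le:
  assumes "unisolvent f B" "S \<subseteq> B" "l \<le> f" "lead_monoms l S \<noteq> {}"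
  shows "card S + card (lead_monoms l S) + (f - l) + ((f - l + 1) choose 2) \<le> (f + 2) choose 2"
proof -
  have "{x \<in> lead_monoms l S. mdeg x = l} \<noteq> {}"
    using assms(4) lead_monoms_top_degree_nonempty by blast
  then have "0 < card {x \<in> lead_monoms l S. mdeg x = l}" by (simp add: card_gt_0_iff)
  then have "f - l \<le> (f - l) * card {x \<in> lead_monoms l S. mdeg x = l}" by simp
  then show ?thesis using unisolvent_card_lead_monoms_growth[OF assms] by linarith
qed

text \<open>All leading monomials of degree \<open>k\<close> polynomials vanishing on \<open>P\<close> have degree above
  \<open>f - l\<close>, since their product with one vanishing on the complement would vanish on \<open>B\<close>.\<close>
lemma unisolvent_card_lead_monoms_le_levels:
  assumes "unisolvent f B" "P \<union> Q = B" "y \<in> lead_monoms l Q" "l \<le> f"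
  shows "card (lead_monoms k P) \<le> (k + l - f) * card {x \<in> lead_monoms k P. mdeg x = k}"
proof -
  have "f - l < mdeg x" if "x \<in> lead_monoms k P" for x
    using unisolvent_mdeg_lead_monoms_gt[OF assms(1,2) that assms(3)] mdeg_lead_monoms[OF assms(3)] assms(4)
    by arith
  then have "card (lead_monoms k P) \<le> (k - (f - l)) * card {x \<in> lead_monoms k P. mdeg x = k}"
    by (intro card_lead_monoms_le_levels) blast
  also have "k - (f - l) = k + l - f" using assms(4) by simp
  finally show ?thesis .
qed

section \<open>Inequalities between binomial coefficients\<close>

lemma two_mult_choose_two: "2 * ((n + 2) choose 2) = (n + 1) * (n + 2)"
  by (induction n) (simp_all add: numeral_2_eq_2)

lemma choose_two_add:
  "((a + b + 2) choose 2) + 1 = ((a + 2) choose 2) + ((b + 2) choose 2) + a * b"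
proof -
  have "2 * (((a + b + 2) choose 2) + 1) = 2 * (((a + 2) choose 2) + ((b + 2) choose 2) + a * b)"
    by (simp only: distrib_left two_mult_choose_two) (simp add: algebra_simps)
  then show ?thesis by simp
qed

lemma choose_two_Suc: "(j + 2) choose 2 = ((j + 1) choose 2) + j + 1"
  by (simp add: numeral_2_eq_2)

lemma two_mult_choose_two_int: "2 * int ((n + 2) choose 2) = (int n + 1) * (int n + 2)"
  using arg_cong[OF two_mult_choose_two[of n], of int] by (simp add: algebra_simps)

lemma two_mult_choose_two_Suc_int: "2 * int ((j + 1) choose 2) = int j * (int j + 1)"
  using two_mult_choose_two_int[of j] choose_two_Suc[of j] by (simp add: algebra_simps)

lemma two_le_mult: "1 \<le> k \<Longrightarrow> 1 \<le> l \<Longrightarrow> 3 \<le> k + l \<Longrightarrow> 2 \<le> (k :: nat) * l"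
  by (cases "k = 1") (auto intro: order.trans[OF _ mult_le_mono[of 2 k 1 l]])

lemma weighted_sum_le:
  fixes a c p y L N :: nat
  assumes "c + a + y * p \<le> N" "a \<le> L * p"
  shows "(L + y) * a + L * c \<le> L * N"
proof -
  have "(L + y) * a + L * c \<le> L * a + L * (y * p) + L * c"
    using mult_le_mono2[OF assms(2), of y] by (simp add: algebra_simps)
  also have "\<dots> = L * (c + a + y * p)" by (simp add: algebra_simps)
  also have "\<dots> \<le> L * N" using assms(1) by simp
  finally show ?thesis .
qed

text \<open>The two weighted inequalities combine through an exact identity with slack \<open>L * Z / 2\<close>,
  which is positive unless \<open>L = 1\<close> and \<open>y = 0\<close>.\<close>
lemma low_degrees_arith_main:
  fixes a b L x y Nf Nd Tx Ty :: int
  assumes "1 \<le> L" "0 \<le> y" "y \<le> x" "\<not> (L = 1 \<and> y = 0)"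
    and "(L + y) * a + (L + x) * b \<le> L * (Nf - Tx - Ty)" "a \<le> L * (L + x + 1)"
    and "2 * Nf = (L + x + y + 1) * (L + x + y + 2)"
    and "2 * Nd = (2 * L + x + y + 1) * (2 * L + x + y + 2)"
    and "2 * Tx = x * (x + 1)" "2 * Ty = y * (y + 1)"
  shows "a + b + Nf < Nd"
proof -
  have s1: "(L + x) * (a + b) \<le> (x - y) * a + L * (Nf - Tx - Ty)"
    using assms(5) by (simp add: algebra_simps)
  have s2: "(x - y) * a \<le> (x - y) * (L * (L + x + 1))"
    using assms(3,6) by (intro mult_left_mono) auto
  define Z where "Z = 2 * L * L + L * x + 2 * L * y + 2 * x * y - x - 2"
  have idt: "2 * ((x - y) * (L * (L + x + 1)) + L * (Nf - Tx - Ty)) + L * Z = 2 * (L + x) * (Nd - Nf)"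
    unfolding Z_def using assms(7-10) by algebra
  have "1 \<le> Z"
  proof (cases "L \<ge> 2")
    case True
    have "2 * L \<le> L * L" using True by (intro mult_right_mono) auto
    moreover have "1 * x \<le> L * x" using assms(1-3) by (intro mult_right_mono) auto
    moreover have "0 \<le> L * y" "0 \<le> x * y" using assms(1-3) by simp_all
    ultimately show ?thesis unfolding Z_def using True by linarith
  next
    case False
    then have "L = 1" "1 \<le> y" using assms(1,2,4) by auto
    moreover have "0 \<le> x * y" using assms(2,3) by simp
    ultimately show ?thesis unfolding Z_def by simp
  qed
  then have "1 \<le> L * Z" using assms(1) mult_mono[of 1 L 1 Z] by simp
  then have "(L + x) * (a + b) < (L + x) * (Nd - Nf)" using s1 s2 idt by (simp add: algebra_simps)
  then have "a + b < Nd - Nf" using assms(1-3) by (simp add: mult_less_cancel_left)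
  then show ?thesis by simp
qed

lemma low_degrees_arith:
  fixes a b g L x y Nf Nd Nl Tx Ty :: int
  assumes "1 \<le> L" "0 \<le> x" "0 \<le> y" "3 \<le> 2 * L + x + y" "1 \<le> a" "2 \<le> b"
    and h1: "(L + y) * a + L * (g + Ty) \<le> L * Nf" and h2: "(L + x) * b + L * Tx \<le> L * g"
    and aL: "a \<le> L * (L + x + 1)" and bL: "b \<le> L * (L + y + 1)"
    and Nf: "2 * Nf = (L + x + y + 1) * (L + x + y + 2)"
    and Nd: "2 * Nd = (2 * L + x + y + 1) * (2 * L + x + y + 2)"
    and Nl: "2 * Nl = (L + y + 1) * (L + y + 2)"
    and Tx: "2 * Tx = x * (x + 1)" and Ty: "2 * Ty = y * (y + 1)"
  shows "a + b + Nf \<le> Nd \<and> (g + Nl + 1 < Nd \<longrightarrow> a + b + Nf < Nd)"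
proof -
  have sum: "(L + y) * a + (L + x) * b \<le> L * (Nf - Tx - Ty)"
    using h1 h2 by (simp add: algebra_simps)
  consider "y \<le> x" "\<not> (L = 1 \<and> y = 0)" | "x < y" "\<not> (L = 1 \<and> x = 0)"
    | "L = 1" "y = 0" | "L = 1" "x = 0" "x < y" by linarith
  then show ?thesis
  proof cases
    case 1
    then show ?thesis using low_degrees_arith_main[OF assms(1,3) 1 sum aL Nf Nd Tx Ty] by simp
  next
    case 2
    have "b + a + Nf < Nd"
    proof (rule low_degrees_arith_main[where x = y and y = x and Tx = Ty and Ty = Tx])
      show "(L + x) * b + (L + y) * a \<le> L * (Nf - Ty - Tx)" using sum by (simp add: algebra_simps)
      show "2 * Nf = (L + y + x + 1) * (L + y + x + 2)" "2 * Nd = (2 * L + y + x + 1) * (2 * L + y + x + 2)"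
        using Nf Nd by (simp_all add: ac_simps)
    qed (use assms 2 in auto)
    then show ?thesis by simp
  next
    case 3
    then have "b = 2" "Ty = 0" "1 \<le> x" using bL assms(4,6) Ty by auto
    moreover have "2 * Nf - 2 * Tx = 4 * x + 6" "2 * Nd - 2 * Nf = 2 * x + 6"
      using Nf Nd Tx 3 by (simp_all add: algebra_simps)
    ultimately show ?thesis using h1 h2 3 by simp
  next
    case 4
    then have hb: "b \<le> g" and ha: "(1 + y) * a + g + Ty \<le> Nf" and "a \<le> 2"
      using h1 h2 Tx aL by auto
    have N: "2 * Nf - 2 * Ty = 4 * y + 6" "2 * Nd - 2 * Nf = 2 * y + 6" "Nl = Nf"
      using Nf Nd Nl Ty 4 by (simp_all add: algebra_simps)
    have "a \<noteq> 2"
    proof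
      assume "a = 2"
      then have "2 + 2 * y + g + Ty \<le> Nf" using ha by (simp add: algebra_simps)
      then show False using hb N(1) assms(6) by linarith
    qed
    then have "a = 1" using \<open>a \<le> 2\<close> assms(5) by linarith
    then have "1 + y + g + Ty \<le> Nf" using ha by simp
    then show ?thesis using hb N \<open>a = 1\<close> by linarith
  qed
qed

lemma low_degrees_choose_arith:
  fixes a b g L x y :: nat
  assumes "1 \<le> L" "3 \<le> 2 * L + x + y" "1 \<le> a" "2 \<le> b"
    and h1: "(L + y) * a + L * (g + ((y + 1) choose 2)) \<le> L * ((L + x + y + 2) choose 2)"
    and h2: "(L + x) * b + L * ((x + 1) choose 2) \<le> L * g"
    and aL: "a \<le> L * (L + x + 1)" and bL: "b \<le> L * (L + y + 1)"
  shows "a + b + ((L + x + y + 2) choose 2) \<le> (2 * L + x + y + 2) choose 2"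
    and "g + ((L + y + 2) choose 2) + 1 < (2 * L + x + y + 2) choose 2 \<Longrightarrow>
      a + b + ((L + x + y + 2) choose 2) < (2 * L + x + y + 2) choose 2"
proof -
  have "int a \<le> int (L * (L + x + 1))" "int b \<le> int (L * (L + y + 1))"
    using aL bL by (simp_all only: of_nat_le_iff)
  then have aL': "int a \<le> int L * (int L + int x + 1)" and bL': "int b \<le> int L * (int L + int y + 1)"
    by (simp_all add: algebra_simps)
  have "int ((L + y) * a + L * (g + ((y + 1) choose 2))) \<le> int (L * ((L + x + y + 2) choose 2))"
    using h1 by (simp only: of_nat_le_iff)
  then have h1': "(int L + int y) * int a + int L * (int g + int ((y + 1) choose 2))
      \<le> int L * int ((L + x + y + 2) choose 2)"
    by simp
  have "int ((L + x) * b + L * ((x + 1) choose 2)) \<le> int (L * g)"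
    using h2 by (simp only: of_nat_le_iff)
  then have h2': "(int L + int x) * int b + int L * int ((x + 1) choose 2) \<le> int L * int g"
    by simp
  have "int a + int b + int ((L + x + y + 2) choose 2) \<le> int ((2 * L + x + y + 2) choose 2) \<and>
      (int g + int ((L + y + 2) choose 2) + 1 < int ((2 * L + x + y + 2) choose 2) \<longrightarrow>
        int a + int b + int ((L + x + y + 2) choose 2) < int ((2 * L + x + y + 2) choose 2))"
  proof (rule low_degrees_arith[OF _ _ _ _ _ _ h1' h2' aL' bL'])
    show "2 * int ((L + x + y + 2) choose 2) = (int L + int x + int y + 1) * (int L + int x + int y + 2)"
      using two_mult_choose_two_int[of "L + x + y"] by simp
    show "2 * int ((2 * L + x + y + 2) choose 2)
        = (2 * int L + int x + int y + 1) * (2 * int L + int x + int y + 2)"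
      using two_mult_choose_two_int[of "2 * L + x + y"] by simp
    show "2 * int ((L + y + 2) choose 2) = (int L + int y + 1) * (int L + int y + 2)"
      using two_mult_choose_two_int[of "L + y"] by simp
  qed (use assms(1-4) two_mult_choose_two_Suc_int in simp_all)
  then show "a + b + ((L + x + y + 2) choose 2) \<le> (2 * L + x + y + 2) choose 2"
    "g + ((L + y + 2) choose 2) + 1 < (2 * L + x + y + 2) choose 2 \<Longrightarrow>
      a + b + ((L + x + y + 2) choose 2) < (2 * L + x + y + 2) choose 2"
    by linarith+
qed

section \<open>The bounds on \<open>mu_e\<close> and \<open>tau_e\<close>\<close>

lemma card_lead_monoms_mu_bound:
  assumes "unisolvent f B" "P \<subseteq> B" "f < d" "1 \<le> e" "e < d" "lead_monoms e P \<noteq> {}"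
  shows "card (lead_monoms e P) + card P + ((d - e + 2) choose 2) \<le> (d + 2) choose 2"
proof (cases "f < e")
  case True
  have "card P + card (lead_monoms e P) \<le> (e + 2) choose 2"
    using unisolvent_card_lead_monoms_le[OF assms(1,2)] True by simp
  moreover have "((d + 2) choose 2) + 1 = ((e + 2) choose 2) + ((d - e + 2) choose 2) + e * (d - e)"
    using choose_two_add[of e "d - e"] assms(5) by simp
  moreover have "1 \<le> e * (d - e)" using assms(4,5) by simp
  ultimately show ?thesis by linarith
next
  case False
  define j L where "j = f - e" and "L = d - f"
  have d: "d = f + L" "d - e = j + L" and f: "f = e + j" and "1 \<le> L"
    using False assms(3) by (auto simp: j_def L_def)
  have "card P + card (lead_monoms e P) + j + ((j + 1) choose 2) \<le> (f + 2) choose 2"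
    using unisolvent_card_lead_monoms_add_le[OF assms(1,2) _ assms(6)] False by (simp add: j_def)
  moreover have "((d + 2) choose 2) + 1 = ((f + 2) choose 2) + ((L + 2) choose 2) + f * L"
    using choose_two_add[of f L] d by simp
  moreover have "((d - e + 2) choose 2) + 1 = ((j + 2) choose 2) + ((L + 2) choose 2) + j * L"
    using choose_two_add[of j L] d by simp
  moreover have "f * L = e * L + j * L" using f by (simp add: algebra_simps)
  moreover have "1 \<le> e * L" using assms(4) \<open>1 \<le> L\<close> by simp
  ultimately show ?thesis using choose_two_Suc[of j] by linarith
qed

lemma card_lead_monoms_tau_bound_high_high:
  assumes "unisolvent f B" "P \<union> Q = B" "P \<inter> Q = {}" "f < k" "f < l" "3 \<le> k + l"
  shows "card (lead_monoms k P) + card (lead_monoms l Q) + ((f + 2) choose 2) + 1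
    \<le> (k + l + 2) choose 2"
proof -
  have "card P + card (lead_monoms k P) \<le> (k + 2) choose 2"
    "card Q + card (lead_monoms l Q) \<le> (l + 2) choose 2"
    using unisolvent_card_lead_monoms_le[OF assms(1)] assms(2,4,5) by auto
  moreover have "2 \<le> k * l" using two_le_mult assms(4-6) by simp
  ultimately show ?thesis
    using unisolvent_card_partition[OF assms(1-3)] choose_two_add[of k l] by linarith
qed

lemma card_lead_monoms_tau_bound_high_low:
  assumes "unisolvent f B" "P \<union> Q = B" "P \<inter> Q = {}" "f < k" "l \<le> f" "1 \<le> l"
    and "lead_monoms l Q \<noteq> {}"
  shows "card (lead_monoms k P) + card (lead_monoms l Q) + ((f + 2) choose 2) + 1
    \<le> (k + l + 2) choose 2"
proof -
  define j L where "j = f - l" and "L = k - j"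
  have f: "f = l + j" and k: "k = j + L" and "2 \<le> L" using assms(4-6) by (auto simp: j_def L_def)
  have "card P + card (lead_monoms k P) \<le> (k + 2) choose 2"
    using unisolvent_card_lead_monoms_le[OF assms(1)] assms(2,4) by auto
  moreover have "card Q + card (lead_monoms l Q) + j + ((j + 1) choose 2) \<le> (f + 2) choose 2"
    using unisolvent_card_lead_monoms_add_le[OF assms(1) _ assms(5,7)] assms(2) by (auto simp: j_def)
  moreover have "((k + l + 2) choose 2) + 1 = ((l + 2) choose 2) + ((k + 2) choose 2) + l * k"
    using choose_two_add[of l k] by (simp add: add.commute)
  moreover have "((f + 2) choose 2) + 1 = ((l + 2) choose 2) + ((j + 2) choose 2) + l * j"
    using choose_two_add[of l j] f by simp
  moreover have "l * k = l * j + l * L" using k by (simp add: algebra_simps)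
  moreover have "2 \<le> l * L" using two_le_mult[of l L] assms(6) \<open>2 \<le> L\<close> by simp
  ultimately show ?thesis
    using unisolvent_card_partition[OF assms(1-3)] choose_two_Suc[of j] by linarith
qed

lemma card_lead_monoms_tau_bound_low_low:
  assumes "unisolvent f B" "P \<union> Q = B" "P \<inter> Q = {}" "k \<le> f" "l \<le> f" "f < k + l" "3 \<le> k + l"
    and "1 \<le> card (lead_monoms k P)" "2 \<le> card (lead_monoms l Q)"
  shows "card (lead_monoms k P) + card (lead_monoms l Q) + ((f + 2) choose 2) \<le> (k + l + 2) choose 2"
    and "card P + ((l + 2) choose 2) + 1 < (k + l + 2) choose 2 \<Longrightarrow>
      card (lead_monoms k P) + card (lead_monoms l Q) + ((f + 2) choose 2) < (k + l + 2) choose 2"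
proof -
  define L x y where "L = k + l - f" and "x = f - l" and "y = f - k"
  have kl: "k = L + x" "l = L + y" "f = L + x + y" "k + l = 2 * L + x + y" "1 \<le> L"
    using assms(4-6) by (auto simp: L_def x_def y_def)
  obtain u v where u: "u \<in> lead_monoms k P" and v: "v \<in> lead_monoms l Q"
    using assms(8,9) by (metis card.empty ex_in_conv not_one_le_zero le_trans one_le_numeral)
  define a b g p q where "a = card (lead_monoms k P)" and "b = card (lead_monoms l Q)"
    and "g = card P" and "p = card {m \<in> lead_monoms k P. mdeg m = k}"
    and "q = card {m \<in> lead_monoms l Q. mdeg m = l}"
  have "g + a + y * p + ((y + 1) choose 2) \<le> (f + 2) choose 2"
    using unisolvent_card_lead_monoms_growth[OF assms(1) _ assms(4)] u assms(2) kl
    by (auto simp: a_def g_def p_def)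
  moreover have aL: "a \<le> L * p"
    using unisolvent_card_lead_monoms_le_levels[OF assms(1,2) v assms(5)] by (simp add: a_def p_def L_def)
  ultimately have h1: "(L + y) * a + L * (g + ((y + 1) choose 2)) \<le> L * ((f + 2) choose 2)"
    by (intro weighted_sum_le) simp_all
  have "card Q + b + x * q + ((x + 1) choose 2) \<le> (f + 2) choose 2"
    using unisolvent_card_lead_monoms_growth[OF assms(1) _ assms(5)] v assms(2) kl
    by (auto simp: b_def q_def)
  then have "((x + 1) choose 2) + b + x * q \<le> g"
    using unisolvent_card_partition[OF assms(1-3)] by (simp add: g_def)
  moreover have bL: "b \<le> L * q"
    using unisolvent_card_lead_monoms_le_levels[of f B Q P u k l] assms(1,2) u assms(4)
    by (simp add: b_def q_def L_def Un_commute add.commute)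
  ultimately have h2: "(L + x) * b + L * ((x + 1) choose 2) \<le> L * g"
    by (rule weighted_sum_le)
  have "p \<le> L + x + 1" "q \<le> L + y + 1"
    using card_degree_level_le kl unfolding p_def q_def by (metis add.assoc)+
  then have "a \<le> L * (L + x + 1)" "b \<le> L * (L + y + 1)"
    using aL bL mult_le_mono2 order_trans by blast+
  note bounds = low_degrees_choose_arith[OF kl(5) _ _ _ h1[unfolded kl(3)] h2 this]
  show "a + b + ((f + 2) choose 2) \<le> (k + l + 2) choose 2"
    "g + ((l + 2) choose 2) + 1 < (k + l + 2) choose 2 \<Longrightarrow> a + b + ((f + 2) choose 2) < (k + l + 2) choose 2"
    using bounds[folded kl(2-4)] assms(7-9) kl(4) by (simp_all add: a_def b_def)
qed

lemma card_lead_monoms_tau_bound: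
  assumes "unisolvent f B" "P \<subseteq> B" "f < d" "3 \<le> d" "1 \<le> e" "e < d"
    and "1 \<le> card (lead_monoms e P)" "2 \<le> card (lead_monoms (d - e) (B - P))"
  shows "card (lead_monoms e P) + card (lead_monoms (d - e) (B - P)) + ((f + 2) choose 2)
      \<le> (d + 2) choose 2" (is "?s \<le> ?n")
    and "card P + ((d - e + 2) choose 2) + 1 < (d + 2) choose 2 \<Longrightarrow>
      card (lead_monoms e P) + card (lead_monoms (d - e) (B - P)) + ((f + 2) choose 2)
      < (d + 2) choose 2" (is "?c \<Longrightarrow> _")
proof -
  have part: "P \<union> (B - P) = B" "P \<inter> (B - P) = {}" "(B - P) \<union> P = B" "(B - P) \<inter> P = {}"
    using assms(2) by auto
  have d: "d = e + (d - e)" "d = (d - e) + e" using assms(6) by simp_all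
  have ne: "lead_monoms e P \<noteq> {}" "lead_monoms (d - e) (B - P) \<noteq> {}"
    using assms(7,8) by auto
  consider "f < e" "f < d - e" | "f < e" "d - e \<le> f" | "e \<le> f" "f < d - e" | "e \<le> f" "d - e \<le> f"
    by linarith
  then have "?s \<le> ?n \<and> (?c \<longrightarrow> ?s < ?n)"
  proof cases
    case 1
    then show ?thesis
      using card_lead_monoms_tau_bound_high_high[OF assms(1) part(1,2) 1] assms(4) d(1) by simp
  next
    case 2
    then show ?thesis
      using card_lead_monoms_tau_bound_high_low[OF assms(1) part(1,2) 2 _ ne(2)] assms(6) d(1)
      by simp
  next
    case 3
    then show ?thesis
      using card_lead_monoms_tau_bound_high_low[OF assms(1) part(3,4) 3(2,1) assms(5) ne(1)] d(2)
      by simp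
  next
    case 4
    then show ?thesis
      using card_lead_monoms_tau_bound_low_low[OF assms(1) part(1,2) 4] assms(3,4,7,8) d(1)
      by simp
  qed
  then show "?s \<le> ?n" "?c \<Longrightarrow> ?s < ?n" by blast+
qed

lemma mu_e_less:
  assumes "unisolvent f B" "D \<subseteq> B" "f < d" "1 \<le> e" "e < d"
  shows "mu_e d e B D < int ((d + 2) choose 2)"
proof (cases "alpha_e e D < 0")
  case True
  then show ?thesis by (simp add: mu_e_def)
next
  case False
  define P where "P = {b \<in> B. psi e b \<in> V_e e D}"
  have "finite B" using assms(1) by (simp add: unisolvent_def)
  have alpha: "alpha_e e D \<le> int (card (lead_monoms e P)) - 1"
    unfolding P_def using alpha_e_le[OF \<open>finite B\<close> assms(2,4)] .
  then have "lead_monoms e P \<noteq> {}" using False by auto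
  then have "card (lead_monoms e P) + card P + ((d - e + 2) choose 2) \<le> (d + 2) choose 2"
    using card_lead_monoms_mu_bound[OF assms(1) _ assms(3-5)] by (auto simp: P_def)
  moreover have "mu_e d e B D = alpha_e e D + int (card P) + int ((d - e + 2) choose 2)"
    using False gamma_e_eq[OF assms(4)] by (simp add: mu_e_def P_def)
  ultimately show ?thesis using alpha by linarith
qed

lemma tau_e_less:
  assumes "unisolvent f B" "D \<subseteq> B" "f < d" "3 \<le> d" "1 \<le> e" "e < d"
  shows "tau_e d e B D < int ((d + 2) choose 2)"
proof -
  define P where "P = {b \<in> B. psi e b \<in> V_e e D}"
  define m where "m = int ((d + 2) choose 2) - int ((d - e + 2) choose 2) - 1"
  have "finite B" and cB: "card B = (f + 2) choose 2" using assms(1) by (simp_all add: unisolvent_def)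
  have alpha: "alpha_e e D \<le> int (card (lead_monoms e P)) - 1"
    unfolding P_def using alpha_e_le[OF \<open>finite B\<close> assms(2,5)] .
  have beta: "beta_e d e B D \<le> int (card (lead_monoms (d - e) (B - P))) - 2"
    unfolding P_def using beta_e_le[OF \<open>finite B\<close> assms(6)] .
  have tau: "tau_e d e B D = (if min (alpha_e e D) (beta_e d e B D) < 0 \<or> int (card P) > m then 0
      else alpha_e e D + beta_e d e B D + int (card B) + (if int (card P) = m then 2 else 3))"
    using gamma_e_eq[OF assms(5)] by (simp add: tau_e_def Let_def P_def m_def)
  show ?thesis
  proof (cases "min (alpha_e e D) (beta_e d e B D) < 0 \<or> int (card P) > m")
    case True
    then show ?thesis using tau by simp
  next
    case False
    then have lm: "1 \<le> card (lead_monoms e P)" "2 \<le> card (lead_monoms (d - e) (B - P))"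
      using alpha beta by auto
    have "P \<subseteq> B" by (auto simp: P_def)
    note bound = card_lead_monoms_tau_bound[OF assms(1) this assms(3-6) lm]
    consider "int (card P) = m" | "int (card P) < m" using False by linarith
    then show ?thesis
    proof cases
      case 1
      then have "tau_e d e B D = alpha_e e D + beta_e d e B D + int (card B) + 2" using False tau by simp
      then show ?thesis using bound(1) alpha beta cB by linarith
    next
      case 2
      then have "tau_e d e B D = alpha_e e D + beta_e d e B D + int (card B) + 3" using False tau by simp
      moreover have "card P + ((d - e + 2) choose 2) + 1 < (d + 2) choose 2" using 2 m_def by linarith
      ultimately show ?thesis using bound(2) alpha beta cB by linarith
    qed
  qed
qed

theorem lemma25:
  fixes d f :: nat and B :: "(real \<times> real) set"
  assumes "d \<ge> 3" and "f \<le> d - 1"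
    and "finite B" and "card B = (f + 2) choose 2"
    and "\<not> (\<exists>C. curve_le f C \<and> B \<subseteq> C)"
  shows "\<forall>e\<in>{1..d - 1}. \<forall>D. D \<subseteq> B \<longrightarrow>
           max (tau_e d e B D) (mu_e d e B D) < int ((d + 2) choose 2)"
proof (intro ballI allI impI)
  fix e D assume "e \<in> {1..d - 1}" "D \<subseteq> B"
  then have "1 \<le> e" "e < d" using assms(1) by auto
  have "f < d" using assms(1,2) by simp
  have "unisolvent f B" using unisolvent_if_not_on_curve assms(3-5) by blast
  have "tau_e d e B D < int ((d + 2) choose 2)"
    using tau_e_less[OF \<open>unisolvent f B\<close> \<open>D \<subseteq> B\<close> \<open>f < d\<close> assms(1) \<open>1 \<le> e\<close> \<open>e < d\<close>] .
  moreover have "mu_e d e B D < int ((d + 2) choose 2)"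
    using mu_e_less[OF \<open>unisolvent f B\<close> \<open>D \<subseteq> B\<close> \<open>f < d\<close> \<open>1 \<le> e\<close> \<open>e < d\<close>] .
  ultimately show "max (tau_e d e B D) (mu_e d e B D) < int ((d + 2) choose 2)" by simp
qed

end
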